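(* Let $p,d\ge 1$ be integers and let $0<u\le v$ be real numbers with $uv=1$. Let $W\in\mathbb{R}^{p\times d}$ and $\Omega_c\in\mathbb{S}_{++}^d$ be fixed, and let $W\Omega_cW^T$ be eigendecomposed as $Q\,\mathrm{diag}(\mathbf{r})\,Q^T$ with $Q$ orthogonal and $\mathbf{r}\in\mathbb{R}^p$. Then an optimal solution of the problem \[ \min_{\Omega_r}\ \operatorname{tr}(\Omega_r W\Omega_c W^T) - d\log\det(\Omega_r)\quad\text{subject to}\quad uI_p\preceq \Omega_r\preceq vI_p \] is given by $Q\,\mathrm{diag}\big(\mathbb{T}_{[u,v]}(d/\mathbf{r})\big)\,Q^T$.
   Context: $\mathbb{S}_{++}^d$ denotes real symmetric positive definite $d\times d$ matrices and $\preceq$ the Loewner order; the optimization is over symmetric positive definite $\Omega_r$. The thresholding function is $\mathbb{T}_{[u,v]}(x)=\max\{u,\min\{v,x\}\}$, and $\mathbb{T}_{[u,v]}(d/\mathbf{r})$ is the vector whose $i$-th entry is $\mathbb{T}_{[u,v]}(d/r_i)$ (with the convention $d/0=+\infty$, so that a zero eigenvalue is mapped to $v$). *)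

theory Defs
  imports "HOL-Analysis.Analysis"
begin

definition symmetric_mat :: "real^'n^'n \<Rightarrow> bool" where
  "symmetric_mat A \<longleftrightarrow> transpose A = A"

definition pos_semidef :: "real^'n^'n \<Rightarrow> bool" where
  "pos_semidef A \<longleftrightarrow> symmetric_mat A \<and> (\<forall>x. 0 \<le> x \<bullet> (A *v x))"

definition pos_def :: "real^'n^'n \<Rightarrow> bool" where
  "pos_def A \<longleftrightarrow> symmetric_mat A \<and> (\<forall>x. x \<noteq> 0 \<longrightarrow> 0 < x \<bullet> (A *v x))"

definition loewner_le :: "real^'n^'n \<Rightarrow> real^'n^'n \<Rightarrow> bool" where
  "loewner_le A B \<longleftrightarrow> symmetric_mat A \<and> symmetric_mat B \<and> pos_semidef (B - A)"

definition diag_mat :: "real^'n \<Rightarrow> real^'n^'n" where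
  "diag_mat r = (\<chi> i j. if i = j then r $ i else 0)"

definition threshold :: "real \<Rightarrow> real \<Rightarrow> real \<Rightarrow> real" where
  "threshold u v x = max u (min v x)"

text \<open>Entrywise T_{[u,v]}(d / r), with the convention d/0 = +infinity (mapped to v).\<close>
definition threshold_inv_vec :: "real \<Rightarrow> real \<Rightarrow> real \<Rightarrow> real^'n \<Rightarrow> real^'n" where
  "threshold_inv_vec u v d r = (\<chi> i. if r $ i = 0 then v else threshold u v (d / r $ i))"

definition objective :: "real^'d^'p \<Rightarrow> real^'d^'d \<Rightarrow> real^'p^'p \<Rightarrow> real" where
  "objective W Oc Or = trace (Or ** W ** Oc ** transpose W) - real CARD('d) * ln (det Or)"

end

theory Submission
  imports Defs
begin

text \<open>Write \<open>M = Q\<^sup>T \<Omega>\<^sub>r Q\<close>. As \<open>Q\<close> is orthogonal, the objective equals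
  \<open>\<Sum>\<^sub>i M\<^sub>i\<^sub>i r\<^sub>i - d log det M\<close>, and the constraint forces \<open>u \<le> M\<^sub>i\<^sub>i \<le> v\<close>.
  Hadamard's inequality \<open>det M \<le> \<Prod>\<^sub>i M\<^sub>i\<^sub>i\<close> bounds the objective from below by the separable
  function \<open>\<Sum>\<^sub>i (M\<^sub>i\<^sub>i r\<^sub>i - d log M\<^sub>i\<^sub>i)\<close>, whose terms are minimised over \<open>[u, v]\<close> by
  \<open>T\<^bsub>[u,v]\<^esub>(d / r\<^sub>i)\<close> (as \<open>r \<ge> 0\<close>); the candidate is diagonal in the basis \<open>Q\<close> and attains
  this bound. Hadamard's inequality is proved by induction over principal blocks, splitting off
  one pivot at a time by a unimodular congruence.\<close>

lemma symmetric_mat_vector_mult: "symmetric_mat M \<Longrightarrow> x v* M = M *v x"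
  unfolding symmetric_mat_def by (metis vector_transpose_matrix)

lemma inner_symmetric_mat_eigenvector:
  fixes N :: "real^'n^'n"
  assumes "symmetric_mat N" "N *v x = axis k c"
  shows "x \<bullet> (N *v y) = c * y$k"
  by (metis assms dot_lmul_matrix symmetric_mat_vector_mult inner_axis' inner_real_def)

lemma inner_congruence:
  fixes P :: "real^'n^'m" and A :: "real^'m^'m"
  shows "x \<bullet> ((transpose P ** A ** P) *v y) = (P *v x) \<bullet> (A *v (P *v y))"
proof -
  have "(transpose P ** A ** P) *v y = transpose P *v (A *v (P *v y))"
    by (simp add: matrix_vector_mul_assoc matrix_mul_assoc)
  then have "(transpose P ** A ** P) *v y = (A *v (P *v y)) v* P"
    by (simp add: transpose_matrix_vector)
  then show ?thesis by (metis dot_lmul_matrix inner_commute)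
qed

lemma matrix_entry_eq_inner: "A$i$j = axis i 1 \<bullet> (A *v axis j 1)"
  by (simp add: matrix_vector_mult_basis inner_axis' column_def)

lemma pos_def_nonneg: "pos_def A \<Longrightarrow> 0 \<le> x \<bullet> (A *v x)"
  unfolding pos_def_def by (cases "x = 0") (auto intro: less_imp_le)

lemma pos_def_invertible:
  fixes A :: "real^'n^'n"
  assumes "pos_def A"
  shows "invertible A"
proof -
  have "inj ((*v) A)"
    unfolding vec.inj_iff_eq_0 using assms unfolding pos_def_def by force
  then obtain B where "B ** A = mat 1"
    using matrix_left_invertible_injective by blast
  then show ?thesis
    using invertible_def matrix_left_right_inverse by blast
qed

lemma symmetric_mat_mat: "symmetric_mat (mat a :: real^'n^'n)"
  unfolding symmetric_mat_def by (rule transpose_mat)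

lemma symmetric_mat_diff: "symmetric_mat A \<Longrightarrow> symmetric_mat B \<Longrightarrow> symmetric_mat (A - B)"
  unfolding symmetric_mat_def by (simp add: transpose_def vec_eq_iff)

lemma quadratic_form_mat: "x \<bullet> ((mat a :: real^'n^'n) *v x) = a * (x \<bullet> x)"
proof -
  have "(mat a :: real^'n^'n) *v x = a *\<^sub>R x"
    by (simp add: mat_def matrix_vector_mult_def vec_eq_iff if_distrib[of "\<lambda>t. t * _"]
        cong: if_cong)
  then show ?thesis by simp
qed

lemma loewner_le_mat_left_iff:
  "loewner_le (mat a) A \<longleftrightarrow> symmetric_mat A \<and> (\<forall>x. a * (x \<bullet> x) \<le> x \<bullet> (A *v x))"
  by (auto simp: loewner_le_def pos_semidef_def symmetric_mat_mat symmetric_mat_diff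
      matrix_vector_mult_diff_rdistrib inner_diff_right quadratic_form_mat)

lemma loewner_le_mat_right_iff:
  "loewner_le A (mat b) \<longleftrightarrow> symmetric_mat A \<and> (\<forall>x. x \<bullet> (A *v x) \<le> b * (x \<bullet> x))"
  by (auto simp: loewner_le_def pos_semidef_def symmetric_mat_mat symmetric_mat_diff
      matrix_vector_mult_diff_rdistrib inner_diff_right quadratic_form_mat)

lemma pos_def_if_loewner_ge:
  fixes A :: "real^'n^'n"
  assumes "0 < a" "loewner_le (mat a) A"
  shows "pos_def A"
  unfolding pos_def_def
proof (intro conjI allI impI)
  show "symmetric_mat A" using assms(2) loewner_le_mat_left_iff by blast
next
  fix x :: "real^'n" assume "x \<noteq> 0"
  then have "0 < a * (x \<bullet> x)" using assms(1) by simp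
  also have "\<dots> \<le> x \<bullet> (A *v x)" using assms(2) loewner_le_mat_left_iff by blast
  finally show "0 < x \<bullet> (A *v x)" .
qed

lemma orthogonal_matrix_inner:
  fixes Q :: "real^'n^'n"
  assumes "orthogonal_matrix Q"
  shows "(Q *v x) \<bullet> (Q *v y) = x \<bullet> y"
  using assms inner_congruence[of x Q "mat 1" y] by (simp add: orthogonal_matrix)

lemma orthogonal_conj_cancel:
  fixes Q D :: "real^'n^'n"
  assumes "orthogonal_matrix Q"
  shows "transpose Q ** (Q ** D ** transpose Q) ** Q = D"
proof -
  have "transpose Q ** (Q ** D ** transpose Q) ** Q = (transpose Q ** Q) ** D ** (transpose Q ** Q)"
    by (simp add: matrix_mul_assoc)
  then show ?thesis using assms by (metis orthogonal_matrix matrix_mul_lid matrix_mul_rid)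
qed

lemma pos_def_orthogonal_congruence:
  fixes A Q :: "real^'n^'n"
  assumes "pos_def A" "orthogonal_matrix Q"
  shows "pos_def (transpose Q ** A ** Q)"
  unfolding pos_def_def
proof (intro conjI allI impI)
  show "symmetric_mat (transpose Q ** A ** Q)"
    using assms unfolding pos_def_def symmetric_mat_def
    by (simp add: matrix_transpose_mul matrix_mul_assoc)
next
  fix x :: "real^'n" assume "x \<noteq> 0"
  then have "Q *v x \<noteq> 0" using orthogonal_matrix_inner[OF assms(2), of x x] by auto
  then show "0 < x \<bullet> ((transpose Q ** A ** Q) *v x)"
    using assms(1) unfolding pos_def_def inner_congruence by blast
qed

lemma diag_entry_congruence:
  "(transpose P ** A ** P)$i$i = (P *v axis i 1) \<bullet> (A *v (P *v axis i 1))"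
  by (simp add: matrix_entry_eq_inner[of "transpose P ** A ** P"] inner_congruence)

lemma loewner_bounds_diag_congruence:
  fixes A Q :: "real^'n^'n"
  assumes Q: "orthogonal_matrix Q" and "loewner_le (mat a) A" "loewner_le A (mat b)"
  shows "a \<le> (transpose Q ** A ** Q)$i$i" "(transpose Q ** A ** Q)$i$i \<le> b"
proof -
  have "(Q *v axis i 1) \<bullet> (Q *v axis i 1) = 1"
    by (simp add: orthogonal_matrix_inner[OF Q] inner_axis_axis)
  then show "a \<le> (transpose Q ** A ** Q)$i$i" "(transpose Q ** A ** Q)$i$i \<le> b"
    using assms(2,3) unfolding loewner_le_mat_left_iff loewner_le_mat_right_iff
    by (metis diag_entry_congruence mult_1_right)+
qed

lemma symmetric_conj_diag: "symmetric_mat (Q ** diag_mat t ** transpose Q)"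
proof -
  have "transpose (diag_mat t) = diag_mat t"
    by (auto simp: diag_mat_def transpose_def vec_eq_iff)
  then show ?thesis
    unfolding symmetric_mat_def by (simp add: matrix_transpose_mul matrix_mul_assoc)
qed

lemma quadratic_form_conj_diag:
  "x \<bullet> ((Q ** diag_mat t ** transpose Q) *v x) = (\<Sum>i\<in>UNIV. t$i * ((transpose Q *v x)$i)\<^sup>2)"
proof -
  have "diag_mat t *v z = (\<chi> i. t$i * z$i)" for z
    by (simp add: diag_mat_def matrix_vector_mult_def vec_eq_iff
        if_distrib[of "\<lambda>s. s * _"] cong: if_cong)
  then show ?thesis
    using inner_congruence[of x "transpose Q" "diag_mat t" x]
    by (simp add: inner_vec_def power2_eq_square algebra_simps)
qed

lemma loewner_bounds_conj_diag:
  fixes Q :: "real^'n^'n"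
  assumes Q: "orthogonal_matrix Q" and t: "\<And>i. a \<le> t$i \<and> t$i \<le> b"
  shows "loewner_le (mat a) (Q ** diag_mat t ** transpose Q)"
    and "loewner_le (Q ** diag_mat t ** transpose Q) (mat b)"
proof -
  have norm: "x \<bullet> x = (\<Sum>i\<in>UNIV. ((transpose Q *v x)$i)\<^sup>2)" for x
    using orthogonal_matrix_inner[of "transpose Q" x x] Q
    by (simp add: inner_vec_def power2_eq_square)
  have "a * (x \<bullet> x) \<le> x \<bullet> ((Q ** diag_mat t ** transpose Q) *v x)"
    and "x \<bullet> ((Q ** diag_mat t ** transpose Q) *v x) \<le> b * (x \<bullet> x)" for x
    unfolding norm quadratic_form_conj_diag sum_distrib_left
    using t by (auto intro!: sum_mono mult_right_mono)
  then show "loewner_le (mat a) (Q ** diag_mat t ** transpose Q)"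
    and "loewner_le (Q ** diag_mat t ** transpose Q) (mat b)"
    by (simp_all add: loewner_le_mat_left_iff loewner_le_mat_right_iff symmetric_conj_diag)
qed

text \<open>The principal submatrix on \<open>S\<close>, padded with the identity so that it keeps the type
  of \<open>M\<close>.\<close>
definition principal_block :: "real^'n^'n \<Rightarrow> 'n set \<Rightarrow> real^'n^'n" where
  "principal_block M S = (\<chi> i j. if i \<in> S \<and> j \<in> S then M$i$j else mat 1 $ i $ j)"

lemma principal_block_empty: "principal_block M {} = mat 1"
  by (simp add: principal_block_def vec_eq_iff)

lemma principal_block_UNIV: "principal_block M UNIV = M"
  by (simp add: principal_block_def vec_eq_iff)

lemma principal_block_principal_block:
  "principal_block (principal_block M T) S = principal_block M (S \<inter> T)"
  by (simp add: principal_block_def vec_eq_iff)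

lemma quadratic_form_principal_block:
  fixes M :: "real^'n^'n" and x :: "real^'n" and S :: "'n set"
  defines "z \<equiv> \<chi> i. if i \<in> S then x$i else 0"
  shows "x \<bullet> (principal_block M S *v x) = z \<bullet> (M *v z) + (\<Sum>i\<in>-S. (x$i)\<^sup>2)"
proof -
  have "principal_block M S *v x = (\<chi> i. if i \<in> S then (M *v z)$i else x$i)"
    by (auto simp: vec_eq_iff matrix_vector_mult_def principal_block_def z_def mat_def
        if_distrib[of "\<lambda>t. t * _"] cong: if_cong intro!: sum.cong)
  then have "x \<bullet> (principal_block M S *v x)
      = (\<Sum>i\<in>S. z$i * (M *v z)$i) + (\<Sum>i\<in>-S. (x$i)\<^sup>2)"
    by (simp add: inner_vec_def if_distrib[of "\<lambda>t. _ * t"] sum.If_cases Compl_eq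
        power2_eq_square z_def)
  moreover have "z \<bullet> (M *v z) = (\<Sum>i\<in>S. z$i * (M *v z)$i)"
    by (simp add: inner_vec_def z_def if_distrib[of "\<lambda>t. t * _"] sum.If_cases)
  ultimately show ?thesis by simp
qed

lemma pos_def_principal_block:
  assumes "pos_def M"
  shows "pos_def (principal_block M S)"
  unfolding pos_def_def
proof safe
  have "symmetric_mat M" using assms pos_def_def by blast
  then show "symmetric_mat (principal_block M S)"
    unfolding symmetric_mat_def principal_block_def
    by (auto simp: vec_eq_iff transpose_def mat_def)
next
  fix x :: "real^'a" assume "x \<noteq> 0"
  define z where "z = (\<chi> i. if i \<in> S then x$i else 0)"
  have "0 \<le> z \<bullet> (M *v z)" using assms by (rule pos_def_nonneg)
  moreover have "0 \<le> (\<Sum>i\<in>-S. (x$i)\<^sup>2)" by (simp add: sum_nonneg)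
  moreover have "0 < z \<bullet> (M *v z) \<or> 0 < (\<Sum>i\<in>-S. (x$i)\<^sup>2)"
  proof (cases "z = 0")
    case False
    then show ?thesis using assms pos_def_def by blast
  next
    case True
    obtain i where "x$i \<noteq> 0" using \<open>x \<noteq> 0\<close> by (auto simp: vec_eq_iff)
    moreover from this have "i \<in> -S" using True by (auto simp: z_def vec_eq_iff split: if_splits)
    ultimately have "0 < (x$i)\<^sup>2" "(x$i)\<^sup>2 \<le> (\<Sum>i\<in>-S. (x$i)\<^sup>2)"
      by (auto intro: member_le_sum)
    then show ?thesis by linarith
  qed
  ultimately show "0 < x \<bullet> (principal_block M S *v x)"
    unfolding quadratic_form_principal_block z_def by linarith
qed

text \<open>The constant \<open>c\<close> is the Schur complement of the block of \<open>N\<close> on the indices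
  other than \<open>k\<close>; \<open>c \<le> N$k$k\<close> is the inequality \<open>0 \<le> y \<bullet> (N *v y)\<close> for \<open>y = axis k 1 - x\<close>.\<close>
lemma pos_def_pivot:
  fixes N :: "real^'n^'n"
  assumes N: "pos_def N"
  obtains x c where "x$k = 1" "N *v x = axis k c" "0 < c" "c \<le> N$k$k"
proof -
  obtain N' where "N ** N' = mat 1"
    using pos_def_invertible[OF N] invertible_def by blast
  define z where "z = N' *v axis k 1"
  have Nz: "N *v z = axis k 1"
    by (simp add: z_def matrix_vector_mul_assoc \<open>N ** N' = mat 1\<close>)
  then have "z \<noteq> 0" by (auto simp: axis_eq_0_iff)
  then have "0 < z \<bullet> (N *v z)" using N pos_def_def by blast
  then have zk: "0 < z$k" by (simp add: Nz inner_axis)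
  define c where "c = 1 / z$k"
  define x where "x = c *s z"
  have xk: "x$k = 1" and Nx: "N *v x = axis k c" and "0 < c"
    using zk by (simp_all add: x_def c_def Nz vec_eq_iff axis_def matrix_vector_mult_scaleR
        scalar_mult_eq_scaleR)
  have symN: "symmetric_mat N" using N pos_def_def by blast
  have xN: "x \<bullet> (N *v y) = c * y$k" for y
    using symN Nx by (rule inner_symmetric_mat_eigenvector)
  define e :: "real^'n" where "e = axis k 1"
  have "0 \<le> (e - x) \<bullet> (N *v (e - x))" using N by (rule pos_def_nonneg)
  also have "\<dots> = e \<bullet> (N *v e) - e \<bullet> (N *v x) - x \<bullet> (N *v e) + x \<bullet> (N *v x)"
    by (simp add: matrix_vector_mult_diff_distrib inner_diff_left inner_diff_right)
  also have "\<dots> = N$k$k - c"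
    by (simp add: xN Nx xk e_def inner_axis matrix_entry_eq_inner[symmetric])
  finally show ?thesis using that xk Nx \<open>0 < c\<close> by simp
qed

lemma det_eq_pivot_times_det_principal_block:
  fixes N :: "real^'n^'n"
  assumes symN: "symmetric_mat N" and xk: "x$k = 1" and Nx: "N *v x = axis k c"
  shows "det N = c * det (principal_block N (-{k}))"
proof -
  define P where "P = principal_block N (-{k})"
  define E :: "real^'n^'n" where "E = (\<chi> i j. if j = k then x$i else mat 1 $ i $ j)"
  have "det E = x$k * det (mat 1 :: real^'n^'n)"
    unfolding E_def using cramer_lemma[of k "mat 1 :: real^'n^'n" x]
    by (simp only: matrix_vector_mul_lid)
  then have "det E = 1" by (simp add: xk)
  have E_axis: "E *v axis j 1 = (if j = k then x else axis j 1)" for j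
    unfolding matrix_vector_mult_basis column_def E_def by (auto simp: vec_eq_iff axis_def mat_def)
  have xN: "x \<bullet> (N *v y) = c * y$k" for y
    using symN Nx by (rule inner_symmetric_mat_eigenvector)
  have "transpose E ** N ** E = (\<chi> i. if i = k then c *s row i P else row i P)"
  proof -
    have "(E *v axis i 1) \<bullet> (N *v (E *v axis j 1)) = (if i = k then c * P$i$j else P$i$j)" for i j
      unfolding E_axis
      by (cases "i = k"; cases "j = k";
          simp add: xN xk Nx inner_axis P_def principal_block_def mat_def
            matrix_entry_eq_inner[symmetric];
          simp add: axis_def)
    then show ?thesis
      by (simp add: vec_eq_iff row_def matrix_entry_eq_inner[of "transpose E ** N ** E"]
          inner_congruence)
  qed
  then have "det N = det (\<chi> i. if i = k then c *s row i P else row i P)"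
    by (metis \<open>det E = 1\<close> det_mul det_transpose mult_1 mult_1_right)
  also have "\<dots> = c * det P"
    by (subst det_row_mul) (simp add: row_def vec_lambda_eta)
  finally show ?thesis unfolding P_def .
qed

theorem hadamard_inequality:
  fixes M :: "real^'n^'n"
  assumes M: "pos_def M"
  shows "0 < det M" and "det M \<le> (\<Prod>i\<in>UNIV. M$i$i)"
proof -
  have "0 < det (principal_block M S) \<and> det (principal_block M S) \<le> (\<Prod>i\<in>S. M$i$i)"
    if "finite S" for S
    using that
  proof (induction S rule: finite_induct)
    case empty
    then show ?case by (simp add: principal_block_empty)
  next
    case (insert k S)
    define N where "N = principal_block M (insert k S)"
    have N: "pos_def N" unfolding N_def using M by (rule pos_def_principal_block)
    obtain x c where "x$k = 1" "N *v x = axis k c" "0 < c" "c \<le> N$k$k"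
      using pos_def_pivot[OF N] by blast
    moreover have "N$k$k = M$k$k" by (simp add: N_def principal_block_def)
    moreover have "principal_block N (-{k}) = principal_block M S"
      using insert.hyps(2)
      by (simp add: N_def principal_block_principal_block Int_absorb1 subset_Compl_singleton)
    ultimately have "det N = c * det (principal_block M S)"
      using det_eq_pivot_times_det_principal_block N by (metis pos_def_def)
    moreover have "c * det (principal_block M S) \<le> M$k$k * (\<Prod>i\<in>S. M$i$i)"
      using \<open>0 < c\<close> \<open>c \<le> N$k$k\<close> \<open>N$k$k = M$k$k\<close> insert.IH by (intro mult_mono) auto
    ultimately show ?case
      using insert.IH insert.hyps \<open>0 < c\<close> by (simp add: N_def)
  qed
  from this[of UNIV] show "0 < det M" "det M \<le> (\<Prod>i\<in>UNIV. M$i$i)"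
    by (simp_all add: principal_block_UNIV)
qed

text \<open>The last hypothesis is the variational inequality \<open>(\<rho> - n / t) * (m - t) \<ge> 0\<close> of the convex
  function \<open>m \<mapsto> m * \<rho> - n * ln m\<close>, scaled by \<open>t\<close>.\<close>
lemma linear_minus_log_minimal:
  fixes t m \<rho> n :: real
  assumes "0 < t" "0 < m" "0 \<le> n" "(m - t) * (n - \<rho> * t) \<le> 0"
  shows "t * \<rho> - n * ln t \<le> m * \<rho> - n * ln m"
proof -
  have "ln (m / t) \<le> m / t - 1" using assms by (intro ln_le_minus_one) simp
  then have "ln m - ln t \<le> (m - t) / t" using assms by (simp add: ln_div diff_divide_distrib)
  then have "n * (ln m - ln t) \<le> n * ((m - t) / t)" using assms by (intro mult_left_mono)
  also have "n * ((m - t) / t) = \<rho> * (m - t) + (m - t) * (n - \<rho> * t) / t"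
    using assms by (simp add: field_simps)
  also have "\<dots> \<le> \<rho> * (m - t)" using assms by (simp add: divide_nonpos_pos)
  finally show ?thesis by (simp add: algebra_simps)
qed

lemma threshold_inv_vec_bounds:
  "u \<le> v \<Longrightarrow> u \<le> threshold_inv_vec u v n r $ i \<and> threshold_inv_vec u v n r $ i \<le> v"
  by (auto simp: threshold_inv_vec_def threshold_def)

lemma threshold_inv_vec_variational:
  fixes r :: "real^'n"
  assumes "u \<le> v" "0 \<le> r$i" "0 \<le> n" "u \<le> m" "m \<le> v"
  defines "t \<equiv> threshold_inv_vec u v n r $ i"
  shows "(m - t) * (n - r$i * t) \<le> 0"
proof (cases "r$i = 0")
  case True
  then show ?thesis using assms by (simp add: threshold_inv_vec_def mult_nonpos_nonneg)
next
  case False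
  then have r: "0 < r$i" using assms by simp
  have t: "t = max u (min v (n / r$i))"
    using False by (simp add: t_def threshold_inv_vec_def threshold_def)
  consider "t = n / r$i" | "t = u" "n \<le> r$i * t" | "t = v" "r$i * t \<le> n"
    using t r assms(1) by (smt (verit) le_divide_eq divide_le_eq mult.commute)
  then show ?thesis
    by cases (use r assms in \<open>auto intro: mult_nonneg_nonpos mult_nonpos_nonneg\<close>)
qed

lemma threshold_inv_vec_minimal:
  fixes r :: "real^'n"
  assumes "0 < u" "u \<le> v" "0 \<le> r$i" "0 \<le> n" "u \<le> m" "m \<le> v"
  defines "t \<equiv> threshold_inv_vec u v n r $ i"
  shows "t * r$i - n * ln t \<le> m * r$i - n * ln m"
proof (rule linear_minus_log_minimal)
  show "0 < t" using threshold_inv_vec_bounds[OF assms(2)] assms(1) unfolding t_def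
    by (meson less_le_trans)
  show "(m - t) * (n - r$i * t) \<le> 0"
    unfolding t_def using assms(2-6) by (rule threshold_inv_vec_variational)
qed (use assms in simp_all)

lemma eigenvalues_nonneg:
  fixes W :: "real^'d^'p" and Q :: "real^'p^'p"
  assumes "pos_def Oc" "orthogonal_matrix Q"
    and eig: "W ** Oc ** transpose W = Q ** diag_mat r ** transpose Q"
  shows "0 \<le> r$i"
proof -
  define q where "q = Q *v axis i 1"
  have "r$i = (transpose Q ** (W ** Oc ** transpose W) ** Q)$i$i"
    unfolding eig orthogonal_conj_cancel[OF assms(2)] by (simp add: diag_mat_def)
  also have "\<dots> = (transpose W *v q) \<bullet> (Oc *v (transpose W *v q))"
    using inner_congruence[of q "transpose W" Oc q] by (simp add: diag_entry_congruence q_def)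
  finally show ?thesis using pos_def_nonneg[OF assms(1)] by simp
qed

lemma objective_in_eigenbasis:
  fixes W :: "real^'d^'p" and Q Or :: "real^'p^'p"
  assumes Q: "orthogonal_matrix Q"
    and eig: "W ** Oc ** transpose W = Q ** diag_mat r ** transpose Q"
  defines "M \<equiv> transpose Q ** Or ** Q"
  shows "objective W Oc Or = (\<Sum>i\<in>UNIV. M$i$i * r$i) - real CARD('d) * ln (det M)"
proof -
  have "Or ** W ** Oc ** transpose W = Or ** (W ** Oc ** transpose W)"
    by (simp add: matrix_mul_assoc)
  also have "\<dots> = (Or ** Q ** diag_mat r) ** transpose Q"
    by (simp add: eig matrix_mul_assoc)
  finally have "trace (Or ** W ** Oc ** transpose W) = trace (M ** diag_mat r)"
    by (simp add: trace_mul_sym[of _ "transpose Q"] M_def matrix_mul_assoc)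
  also have "\<dots> = (\<Sum>i\<in>UNIV. M$i$i * r$i)"
    by (simp add: trace_def matrix_matrix_mult_def diag_mat_def if_distrib[of "\<lambda>s. _ * s"]
        cong: if_cong)
  finally have "trace (Or ** W ** Oc ** transpose W) = (\<Sum>i\<in>UNIV. M$i$i * r$i)" .
  moreover have "det M = det Or"
    using Q det_mul[of "transpose Q" Q] by (simp add: M_def det_mul orthogonal_matrix)
  ultimately show ?thesis by (simp add: objective_def)
qed

lemma objective_conj_diag:
  fixes W :: "real^'d^'p" and Q :: "real^'p^'p"
  assumes Q: "orthogonal_matrix Q"
    and eig: "W ** Oc ** transpose W = Q ** diag_mat r ** transpose Q"
    and t: "\<And>i. 0 < t$i"
  shows "objective W Oc (Q ** diag_mat t ** transpose Q)
    = (\<Sum>i\<in>UNIV. t$i * r$i - real CARD('d) * ln (t$i))"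
proof -
  have "det (diag_mat t) = (\<Prod>i\<in>UNIV. t$i)"
    by (subst det_diagonal) (auto simp: diag_mat_def)
  moreover have "ln (\<Prod>i\<in>UNIV. t$i) = (\<Sum>i\<in>UNIV. ln (t$i))"
    using t by (intro ln_prod) (auto simp: less_imp_neq[symmetric])
  ultimately show ?thesis
    by (simp add: objective_in_eigenbasis[OF Q eig] orthogonal_conj_cancel[OF Q] diag_mat_def
        sum_subtractf sum_distrib_left)
qed

lemma objective_ge_diagonal_sum:
  fixes W :: "real^'d^'p" and Q Or :: "real^'p^'p"
  assumes Q: "orthogonal_matrix Q"
    and eig: "W ** Oc ** transpose W = Q ** diag_mat r ** transpose Q"
    and Or: "pos_def Or"
  defines "M \<equiv> transpose Q ** Or ** Q"
  shows "(\<Sum>i\<in>UNIV. M$i$i * r$i - real CARD('d) * ln (M$i$i)) \<le> objective W Oc Or"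
proof -
  have M: "pos_def M" unfolding M_def using Or Q by (rule pos_def_orthogonal_congruence)
  then have "0 < M$i$i" for i
    using M unfolding pos_def_def matrix_entry_eq_inner by simp
  then have "(\<Sum>i\<in>UNIV. ln (M$i$i)) = ln (\<Prod>i\<in>UNIV. M$i$i)"
    by (intro ln_prod[symmetric]) (auto simp: less_imp_neq[symmetric])
  also have "\<dots> \<ge> ln (det M)"
    using hadamard_inequality[OF M] by simp
  finally show ?thesis
    by (simp add: objective_in_eigenbasis[OF Q eig] M_def sum_subtractf sum_distrib_left[symmetric])
qed

theorem corollary1:
  fixes W :: "real^'d^'p" and Oc :: "real^'d^'d" and Q :: "real^'p^'p" and r :: "real^'p"
    and u v :: real
  assumes "0 < u" and "u \<le> v" and "u * v = 1"
    and "pos_def Oc"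
    and "orthogonal_matrix Q"
    and "W ** Oc ** transpose W = Q ** diag_mat r ** transpose Q"
  shows "let X = Q ** diag_mat (threshold_inv_vec u v (real CARD('d)) r) ** transpose Q in
           pos_def X \<and> loewner_le (mat u) X \<and> loewner_le X (mat v) \<and>
           (\<forall>Or :: real^'p^'p. pos_def Or \<and> loewner_le (mat u) Or \<and> loewner_le Or (mat v)
               \<longrightarrow> objective W Oc X \<le> objective W Oc Or)"
proof -
  note Q = \<open>orthogonal_matrix Q\<close> and eig = assms(6)
  define n where "n = real CARD('d)"
  define t where "t = threshold_inv_vec u v n r"
  define X where "X = Q ** diag_mat t ** transpose Q"
  have t: "u \<le> t$i \<and> t$i \<le> v" for i
    unfolding t_def using \<open>u \<le> v\<close> by (rule threshold_inv_vec_bounds)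
  have t_pos: "0 < t$i" for i using t[of i] \<open>0 < u\<close> by linarith
  have X_lower: "loewner_le (mat u) X" and X_upper: "loewner_le X (mat v)"
    unfolding X_def using loewner_bounds_conj_diag[OF Q t] by blast+
  have "objective W Oc X \<le> objective W Oc Or"
    if Or: "pos_def Or" "loewner_le (mat u) Or" "loewner_le Or (mat v)" for Or
  proof -
    define M where "M = transpose Q ** Or ** Q"
    have M: "u \<le> M$i$i \<and> M$i$i \<le> v" for i
      unfolding M_def using loewner_bounds_diag_congruence[OF Q Or(2,3)] by blast
    have "objective W Oc X = (\<Sum>i\<in>UNIV. t$i * r$i - n * ln (t$i))"
      unfolding X_def n_def using Q eig t_pos by (rule objective_conj_diag)
    also have "\<dots> \<le> (\<Sum>i\<in>UNIV. M$i$i * r$i - n * ln (M$i$i))"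
      unfolding t_def n_def using assms(1,2) eigenvalues_nonneg[OF \<open>pos_def Oc\<close> Q eig] M
      by (intro sum_mono threshold_inv_vec_minimal) auto
    also have "\<dots> \<le> objective W Oc Or"
      unfolding M_def n_def using Q eig Or(1) by (rule objective_ge_diagonal_sum)
    finally show ?thesis .
  qed
  then show ?thesis
    using pos_def_if_loewner_ge[OF \<open>0 < u\<close> X_lower] X_lower X_upper
    by (simp add: Let_def X_def t_def n_def)
qed

end
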